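(* Consider a closed-loop system with the setting described in the context, and let $\widetilde{\mathbf{R}}_{[0,\tau]}$ be the set of states represented by the output of the reachability procedure described in the context (run with sound validated simulation and sound abstract transformers, starting from a finite collection of symbolic states $\widetilde{\mathbf{R}}_0$ whose represented set contains $\mathbf{I}$). Then the procedure yields a sound approximation of the non-bottom reachable states, i.e. $$\widetilde{\mathbf{R}}_{[0,\tau]} \supseteq \mathbf{R}_{[0,\tau]} \setminus \{\bot\}.$$
   Context: Closed-loop system. A plant has state $\mathbf{s}(t)\in\mathbb{R}^l$ evolving according to the ODE $\mathbf{s}'(t)=f(t,\mathbf{s}(t),\mathbf{u}(t))$, where $f:\mathbb{R}\times\mathbb{R}^l\times\mathbb{R}^d\to\mathbb{R}^l$ is continuous in $t$ and $\mathbf{u}$ and uniformly Lipschitz continuous in $\mathbf{s}$; $\mathbf{s}$ is required to be continuous and to satisfy the ODE on each open interval $]jT,(j+1)T[$. A controller is executed periodically with period $T>0$. The command signal $\mathbf{u}(t)$ takes values in a finite set $\mathbf{U}=\{\mathbf{u}^{(1)},\dots,\mathbf{u}^{(P)}\}\subset\mathbb{R}^d$ and is piecewise constant: $\mathbf{u}(t)=\mathbf{u}_0$ on $[0,T[$ and $\mathbf{u}(t)=\mathbf{u}_{j+1}$ on $[(j+1)T,(j+2)T[$. The controller uses a finite collection $\mathbf{N}$ of (already trained) ReLU feedforward neural networks, a selection map $\lambda:\mathbf{U}\to\mathbf{N}$, and deterministic functions $\mathrm{Pre}:\mathbb{R}^l\to\mathbb{R}^m$ and $\mathrm{Post}:\mathbb{R}^p\to\mathbf{U}$;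 writing $F_N:\mathbb{R}^m\to\mathbb{R}^p$ for the function computed by network $N$, the $j$-th execution computes $\mathbf{u}_{j+1}=\mathrm{Post}(F_{\lambda(\mathbf{u}_j)}(\mathrm{Pre}(\mathbf{s}(jT))))$. The state of the closed loop is $\phi(t)=(\mathbf{s}(t),\mathbf{u}(t))$, with initial state $\phi_0=(\mathbf{s}_0,\mathbf{u}_0)$ in a set $\mathbf{I}\subseteq\mathbb{R}^l\times\mathbf{U}$. A target set $\mathbf{T}\subset\mathbb{R}^l\times\mathbf{U}$ is given: if $t_{\mathrm{end}}$ is such that $\phi(t)\notin\mathbf{T}$ for all $t<t_{\mathrm{end}}$ and $\phi(t_{\mathrm{end}})\in\mathbf{T}$, then by definition $\phi(t)=\bot$ (a symbolic "terminated" state) for all $t\in\,]t_{\mathrm{end}},\tau]$. Here $\tau=qT$ with $q\in\mathbb{N}$. For each $\phi_0\in\mathbf{I}$ this determines a unique function $\phi_{\phi_0}:[0,\tau]\to(\mathbb{R}^l\times\mathbf{U})\cup\{\bot\}$. The reachable states at time $t$ are $\mathbf{R}_t=\{\phi_{\phi_0}(t)\mid \phi_0\in\mathbf{I}\}$, and $\mathbf{R}_{[0,\tau]}=\bigcup_{t\in[0,\tau]}\mathbf{R}_t$. Symbolic states. A symbolic state is a pair $([\mathbf{s}],\mathbf{u})$ with $[\mathbf{s}]\subset\mathbb{R}^l$ a box (product of $l$ intervals) and $\mathbf{u}\in\mathbf{U}$; it represents $\{(\mathbf{s},\mathbf{u})\mid \mathbf{s}\in[\mathbf{s}]\}$. A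 symbolic set is a finite collection of symbolic states, representing the union of the represented sets; set relations ($\in$, $\subset$, $\supseteq$) are applied to the represented sets. Sound tools. Validated simulation: given an interval $[t_1,t_2]$, a box $[\mathbf{s}_{t_1}]$ and a constant command $\mathbf{u}$, it returns boxes $[\mathbf{s}_{[t_1,t_2]}]$ and $[\mathbf{s}_{t_2}]$ such that every solution of $\mathbf{s}'=f(t,\mathbf{s},\mathbf{u})$ on $[t_1,t_2]$ with $\mathbf{s}(t_1)\in[\mathbf{s}_{t_1}]$ satisfies $\mathbf{s}(t)\in[\mathbf{s}_{[t_1,t_2]}]$ for all $t\in[t_1,t_2]$ and $\mathbf{s}(t_2)\in[\mathbf{s}_{t_2}]$. Abstract transformers $\mathrm{Pre}^\#$, $F_N^\#$ ($N\in\mathbf{N}$) map boxes to boxes with $\mathrm{Pre}^\#([\mathbf{s}])\supseteq\mathrm{Pre}([\mathbf{s}])$, $F_N^\#([\mathbf{x}])\supseteq F_N([\mathbf{x}])$, and $\mathrm{Post}^\#$ maps a box $[\mathbf{y}]$ to a finite subset of $\mathbf{U}$ containing $\mathrm{Post}([\mathbf{y}])$. Procedure. Start from a finite symbolic set $\widetilde{\mathbf{R}}_0$ whose represented set contains $\mathbf{I}$. For $j=0,\dots,q-1$: initialize $\widetilde{\mathbf{R}}_{[j[}=\widetilde{\mathbf{R}}_{j+1}=\emptyset$; for each symbolic state $([\mathbf{s}_j]_k,\mathbf{u}_{j,k})\in\widetilde{\mathbf{R}}_j$ that is not contained in $\mathbf{T}$: (1) apply validated simulation on $[jT,(j+1)T]$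 with initial box $[\mathbf{s}_j]_k$ and constant command $\mathbf{u}_{j,k}$, obtaining $[\mathbf{s}_{[j[}]_k:=[\mathbf{s}_{[jT,(j+1)T]}]$ and $[\mathbf{s}_{j+1}]_k:=[\mathbf{s}_{t=(j+1)T}]$; add $([\mathbf{s}_{[j[}]_k,\mathbf{u}_{j,k})$ to $\widetilde{\mathbf{R}}_{[j[}$; (2) with $N=\lambda(\mathbf{u}_{j,k})$, compute $\{\mathbf{u}'_1,\dots,\mathbf{u}'_i\}=\mathrm{Post}^\#(F_N^\#(\mathrm{Pre}^\#([\mathbf{s}_j]_k)))$ and add $([\mathbf{s}_{j+1}]_k,\mathbf{u}'_1),\dots,([\mathbf{s}_{j+1}]_k,\mathbf{u}'_i)$ to $\widetilde{\mathbf{R}}_{j+1}$. Symbolic states contained in $\mathbf{T}$ are not propagated (so if some $\widetilde{\mathbf{R}}_{j}$ has no state to propagate, all later sets are empty). The output is $\widetilde{\mathbf{R}}_{[0,\tau]}=\bigcup_{0\le j<q}\widetilde{\mathbf{R}}_{[j[}\cup\bigcup_{0\le j\le q}\widetilde{\mathbf{R}}_j$ (equivalently, the union up to the last index $j_{\mathrm{end}}$ at which states remain). *)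

theory Defs
  imports "HOL-Analysis.Analysis"
begin

definition is_box :: "'a::euclidean_space set \<Rightarrow> bool" where
  "is_box B \<longleftrightarrow> (\<exists>I. (\<forall>i\<in>Basis. is_interval (I i :: real set)) \<and> B = {x. \<forall>i\<in>Basis. x \<bullet> i \<in> I i})"

text \<open>A layer: input width n, weight matrix W, bias b (vectors as functions nat to real).\<close>
type_synonym layer = "nat \<times> (nat \<Rightarrow> nat \<Rightarrow> real) \<times> (nat \<Rightarrow> real)"

definition relu :: "real \<Rightarrow> real" where
  "relu x = max 0 x"

definition affine_layer :: "layer \<Rightarrow> (nat \<Rightarrow> real) \<Rightarrow> (nat \<Rightarrow> real)" where
  "affine_layer L x = (case L of (n, W, b) \<Rightarrow> (\<lambda>i. (\<Sum>j<n. W i j * x j) + b i))"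

fun nn_eval :: "layer list \<Rightarrow> (nat \<Rightarrow> real) \<Rightarrow> (nat \<Rightarrow> real)" where
  "nn_eval [] x = x"
| "nn_eval [L] x = affine_layer L x"
| "nn_eval (L # L' # Ls) x = nn_eval (L' # Ls) (\<lambda>i. relu (affine_layer L x i))"

definition relu_net_fun :: "('m::euclidean_space \<Rightarrow> 'p::euclidean_space) \<Rightarrow> bool" where
  "relu_net_fun F \<longleftrightarrow> (\<exists>Ls ein eout. Ls \<noteq> [] \<and> fst (hd Ls) = DIM('m) \<and>
      bij_betw ein {..<DIM('m)} Basis \<and> bij_betw eout {..<DIM('p)} Basis \<and>
      (\<forall>x. F x = (\<Sum>k<DIM('p). nn_eval Ls (\<lambda>j. x \<bullet> ein j) k *\<^sub>R eout k)))"

definition ode_solution ::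
  "(real \<Rightarrow> 's::euclidean_space \<Rightarrow> 'd \<Rightarrow> 's) \<Rightarrow> 'd \<Rightarrow> real \<Rightarrow> real \<Rightarrow> (real \<Rightarrow> 's) \<Rightarrow> bool" where
  "ode_solution f u t1 t2 s \<longleftrightarrow> continuous_on {t1..t2} s \<and>
     (\<forall>t\<in>{t1<..<t2}. (s has_vector_derivative f t (s t) u) (at t))"

definition closed_loop_exec ::
  "(real \<Rightarrow> 's::euclidean_space \<Rightarrow> 'd \<Rightarrow> 's) \<Rightarrow> real \<Rightarrow> nat \<Rightarrow> ('n \<Rightarrow> 'm \<Rightarrow> 'p) \<Rightarrow> ('d \<Rightarrow> 'n)
    \<Rightarrow> ('s \<Rightarrow> 'm) \<Rightarrow> ('p \<Rightarrow> 'd) \<Rightarrow> 's \<times> 'd \<Rightarrow> (real \<Rightarrow> 's) \<Rightarrow> (nat \<Rightarrow> 'd) \<Rightarrow> bool" where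
  "closed_loop_exec f T q F lam Pre Post phi0 s us \<longleftrightarrow>
     s 0 = fst phi0 \<and> us 0 = snd phi0 \<and>
     continuous_on {0..real q * T} s \<and>
     (\<forall>j<q. \<forall>t\<in>{real j * T<..<real (Suc j) * T}. (s has_vector_derivative f t (s t) (us j)) (at t)) \<and>
     (\<forall>j<q. us (Suc j) = Post (F (lam (us j)) (Pre (s (real j * T)))))"

text \<open>Closed-loop state at time t (None = terminated state bottom): terminated strictly
  after the trajectory has reached the target set.\<close>
definition cl_state ::
  "real \<Rightarrow> ('s \<times> 'd) set \<Rightarrow> (real \<Rightarrow> 's) \<Rightarrow> (nat \<Rightarrow> 'd) \<Rightarrow> real \<Rightarrow> ('s \<times> 'd) option" where
  "cl_state T Tg s us t =
     (if \<exists>t'\<in>{0..<t}. (s t', us (nat \<lfloor>t' / T\<rfloor>)) \<in> Tg then None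
      else Some (s t, us (nat \<lfloor>t / T\<rfloor>)))"

text \<open>R_[0,tau], tau = q T, as a set of options (None = bottom).\<close>
definition reach_set ::
  "(real \<Rightarrow> 's::euclidean_space \<Rightarrow> 'd \<Rightarrow> 's) \<Rightarrow> real \<Rightarrow> nat \<Rightarrow> ('n \<Rightarrow> 'm \<Rightarrow> 'p) \<Rightarrow> ('d \<Rightarrow> 'n)
    \<Rightarrow> ('s \<Rightarrow> 'm) \<Rightarrow> ('p \<Rightarrow> 'd) \<Rightarrow> ('s \<times> 'd) set \<Rightarrow> ('s \<times> 'd) set \<Rightarrow> ('s \<times> 'd) option set" where
  "reach_set f T q F lam Pre Post I Tg =
     {cl_state T Tg s us t | phi0 s us t. phi0 \<in> I \<and>
        closed_loop_exec f T q F lam Pre Post phi0 s us \<and> t \<in> {0..real q * T}}"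

definition rep_sym :: "('s set \<times> 'd) set \<Rightarrow> ('s \<times> 'd) set" where
  "rep_sym X = (\<Union>(B, u)\<in>X. B \<times> {u})"

definition active :: "('s \<times> 'd) set \<Rightarrow> ('s set \<times> 'd) set \<Rightarrow> ('s set \<times> 'd) set" where
  "active Tg X = {(B, u) \<in> X. \<not> (B \<times> {u} \<subseteq> Tg)}"

text \<open>vsim t1 t2 B u = (box enclosing [t1,t2], box enclosing time t2).\<close>
fun proc_R ::
  "(real \<Rightarrow> real \<Rightarrow> 's set \<Rightarrow> 'd \<Rightarrow> 's set \<times> 's set) \<Rightarrow> real \<Rightarrow> ('s set \<Rightarrow> 'm set)
    \<Rightarrow> ('n \<Rightarrow> 'm set \<Rightarrow> 'p set) \<Rightarrow> ('p set \<Rightarrow> 'd set) \<Rightarrow> ('d \<Rightarrow> 'n) \<Rightarrow> ('s \<times> 'd) set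
    \<Rightarrow> ('s set \<times> 'd) set \<Rightarrow> nat \<Rightarrow> ('s set \<times> 'd) set" where
  "proc_R vsim T PreS FS PostS lam Tg R0 0 = R0"
| "proc_R vsim T PreS FS PostS lam Tg R0 (Suc j) =
     {(snd (vsim (real j * T) (real (Suc j) * T) B u), u') | B u u'.
        (B, u) \<in> active Tg (proc_R vsim T PreS FS PostS lam Tg R0 j) \<and>
        u' \<in> PostS (FS (lam u) (PreS B))}"

definition proc_Rint ::
  "(real \<Rightarrow> real \<Rightarrow> 's set \<Rightarrow> 'd \<Rightarrow> 's set \<times> 's set) \<Rightarrow> real \<Rightarrow> ('s set \<Rightarrow> 'm set)
    \<Rightarrow> ('n \<Rightarrow> 'm set \<Rightarrow> 'p set) \<Rightarrow> ('p set \<Rightarrow> 'd set) \<Rightarrow> ('d \<Rightarrow> 'n) \<Rightarrow> ('s \<times> 'd) set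
    \<Rightarrow> ('s set \<times> 'd) set \<Rightarrow> nat \<Rightarrow> ('s set \<times> 'd) set" where
  "proc_Rint vsim T PreS FS PostS lam Tg R0 j =
     {(fst (vsim (real j * T) (real (Suc j) * T) B u), u) | B u.
        (B, u) \<in> active Tg (proc_R vsim T PreS FS PostS lam Tg R0 j)}"

definition proc_output ::
  "(real \<Rightarrow> real \<Rightarrow> 's set \<Rightarrow> 'd \<Rightarrow> 's set \<times> 's set) \<Rightarrow> real \<Rightarrow> ('s set \<Rightarrow> 'm set)
    \<Rightarrow> ('n \<Rightarrow> 'm set \<Rightarrow> 'p set) \<Rightarrow> ('p set \<Rightarrow> 'd set) \<Rightarrow> ('d \<Rightarrow> 'n) \<Rightarrow> ('s \<times> 'd) set
    \<Rightarrow> ('s set \<times> 'd) set \<Rightarrow> nat \<Rightarrow> ('s set \<times> 'd) set" where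
  "proc_output vsim T PreS FS PostS lam Tg R0 q =
     (\<Union>j<q. proc_Rint vsim T PreS FS PostS lam Tg R0 j) \<union>
     (\<Union>j\<le>q. proc_R vsim T PreS FS PostS lam Tg R0 j)"

end

theory Submission
  imports Defs
begin

text \<open>Soundness is an induction over the controller periods. The invariant is that, as long
  as the trajectory has not met the target, the sampled state \<open>(s(jT), u\<^sub>j)\<close> lies in a
  symbolic state of \<open>R\<^sub>j\<close>; such a symbolic state is then active, validated simulation encloses
  the plant on \<open>[jT, (j+1)T]\<close>, and the abstract transformers enclose the next command.
  The remaining hypotheses of the theorem (regularity of \<open>f\<close>, finiteness, the ReLU structure,
  range conditions) only make the closed loop well defined; soundness does not use them.\<close>

lemma nat_floor_divide_bounds:
  fixes t T :: real
  assumes "T > 0" and "0 \<le> t"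
  shows "real (nat \<lfloor>t / T\<rfloor>) * T \<le> t" and "t < real (Suc (nat \<lfloor>t / T\<rfloor>)) * T"
proof -
  have "real (nat \<lfloor>t / T\<rfloor>) = of_int \<lfloor>t / T\<rfloor>"
    using assms by simp
  then have "real (nat \<lfloor>t / T\<rfloor>) \<le> t / T" and "t / T < real (nat \<lfloor>t / T\<rfloor>) + 1"
    by linarith+
  then show "real (nat \<lfloor>t / T\<rfloor>) * T \<le> t" and "t < real (Suc (nat \<lfloor>t / T\<rfloor>)) * T"
    using assms(1) by (simp_all add: pos_le_divide_eq pos_divide_less_eq algebra_simps)
qed

lemma active_memberI:
  assumes "(B, u) \<in> X" and "x \<in> B" and "(x, u) \<notin> Tg"
  shows "(B, u) \<in> active Tg X"
  using assms unfolding active_def by auto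

lemma closed_loop_exec_ode_solution:
  assumes "T > 0" and "closed_loop_exec f T q F lam Pre Post phi0 s us" and "j < q"
  shows "ode_solution f (us j) (real j * T) (real (Suc j) * T) s"
proof -
  have "{real j * T..real (Suc j) * T} \<subseteq> {0..real q * T}"
    using assms(1,3) by (auto intro: order_trans[of _ "real (Suc j) * T"] mult_right_mono)
  then show ?thesis
    using assms(2,3) continuous_on_subset
    unfolding closed_loop_exec_def ode_solution_def by blast
qed

locale sound_reachability =
  fixes f :: "real \<Rightarrow> 's::euclidean_space \<Rightarrow> 'd::euclidean_space \<Rightarrow> 's"
    and T :: real and U :: "'d set"
    and Nset :: "'n set" and F :: "'n \<Rightarrow> 'm::euclidean_space \<Rightarrow> 'p::euclidean_space"
    and lam :: "'d \<Rightarrow> 'n" and Pre :: "'s \<Rightarrow> 'm" and Post :: "'p \<Rightarrow> 'd"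
    and Tg :: "('s \<times> 'd) set"
    and vsim :: "real \<Rightarrow> real \<Rightarrow> 's set \<Rightarrow> 'd \<Rightarrow> 's set \<times> 's set"
    and PreS :: "'s set \<Rightarrow> 'm set" and FS :: "'n \<Rightarrow> 'm set \<Rightarrow> 'p set"
    and PostS :: "'p set \<Rightarrow> 'd set"
    and R0 :: "('s set \<times> 'd) set"
  assumes T_pos: "T > 0"
    and lam_into: "u \<in> U \<Longrightarrow> lam u \<in> Nset"
    and vsim_box: "t1 \<le> t2 \<Longrightarrow> is_box B \<Longrightarrow> u \<in> U \<Longrightarrow> is_box (snd (vsim t1 t2 B u))"
    and vsim_encloses: "t1 \<le> t2 \<Longrightarrow> is_box B \<Longrightarrow> u \<in> U \<Longrightarrow> ode_solution f u t1 t2 s \<Longrightarrow>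
        s t1 \<in> B \<Longrightarrow> (\<forall>t\<in>{t1..t2}. s t \<in> fst (vsim t1 t2 B u)) \<and> s t2 \<in> snd (vsim t1 t2 B u)"
    and PreS_sound: "is_box B \<Longrightarrow> is_box (PreS B) \<and> Pre ` B \<subseteq> PreS B"
    and FS_sound: "N \<in> Nset \<Longrightarrow> is_box X \<Longrightarrow> is_box (FS N X) \<and> F N ` X \<subseteq> FS N X"
    and PostS_sound: "is_box Y \<Longrightarrow> PostS Y \<subseteq> U \<and> Post ` Y \<subseteq> PostS Y"
    and R0_wf: "(B, u) \<in> R0 \<Longrightarrow> is_box B \<and> u \<in> U"
begin

abbreviation R :: "nat \<Rightarrow> ('s set \<times> 'd) set" where
  "R \<equiv> proc_R vsim T PreS FS PostS lam Tg R0"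

lemma period_le: "real j * T \<le> real (Suc j) * T"
  using T_pos by simp

lemma abstract_controller_sound:
  assumes "is_box B" and "u \<in> U"
  shows "PostS (FS (lam u) (PreS B)) \<subseteq> U"
    and "x \<in> B \<Longrightarrow> Post (F (lam u) (Pre x)) \<in> PostS (FS (lam u) (PreS B))"
proof -
  have "is_box (FS (lam u) (PreS B))" and "F (lam u) ` Pre ` B \<subseteq> FS (lam u) (PreS B)"
    using FS_sound[OF lam_into[OF assms(2)]] PreS_sound[OF assms(1)] by blast+
  then show "PostS (FS (lam u) (PreS B)) \<subseteq> U"
    and "x \<in> B \<Longrightarrow> Post (F (lam u) (Pre x)) \<in> PostS (FS (lam u) (PreS B))"
    using PostS_sound by blast+
qed

lemma proc_R_wf: "(B, u) \<in> R j \<Longrightarrow> is_box B \<and> u \<in> U"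
proof (induction j arbitrary: B u)
  case 0
  then show ?case
    using R0_wf by simp
next
  case (Suc j)
  then obtain B0 u0 where "(B0, u0) \<in> R j"
    and B: "B = snd (vsim (real j * T) (real (Suc j) * T) B0 u0)"
    and u: "u \<in> PostS (FS (lam u0) (PreS B0))"
    by (auto simp: active_def)
  with Suc.IH have "is_box B0" and "u0 \<in> U"
    by blast+
  then show ?case
    using B u vsim_box[OF period_le] abstract_controller_sound(1) by blast
qed

lemma sampled_state_in_proc_R:
  assumes exec: "closed_loop_exec f T q F lam Pre Post phi0 s us"
    and phi0: "phi0 \<in> rep_sym R0"
  shows "j \<le> q \<Longrightarrow> \<forall>i<j. (s (real i * T), us i) \<notin> Tg \<Longrightarrow>
    \<exists>B. (B, us j) \<in> R j \<and> s (real j * T) \<in> B"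
proof (induction j)
  case 0
  have "s 0 = fst phi0" and "us 0 = snd phi0"
    using exec unfolding closed_loop_exec_def by auto
  then show ?case
    using phi0 unfolding rep_sym_def by (cases phi0) auto
next
  case (Suc j)
  then obtain B where B: "(B, us j) \<in> R j" and sB: "s (real j * T) \<in> B"
    by auto
  have act: "(B, us j) \<in> active Tg (R j)"
    using active_memberI[OF B sB] Suc.prems(2) by blast
  have Bu: "is_box B" "us j \<in> U"
    using proc_R_wf B by auto
  have "s (real (Suc j) * T) \<in> snd (vsim (real j * T) (real (Suc j) * T) B (us j))"
    using vsim_encloses[OF period_le Bu closed_loop_exec_ode_solution[OF T_pos exec] sB] Suc.prems(1)
    by simp
  moreover have "us (Suc j) \<in> PostS (FS (lam (us j)) (PreS B))"
    using exec Suc.prems(1) abstract_controller_sound(2)[OF Bu sB]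
    unfolding closed_loop_exec_def by auto
  ultimately show ?case
    using act by auto
qed

lemma reach_set_subset_proc_output:
  assumes I_covered: "I \<subseteq> rep_sym R0"
  shows "reach_set f T q F lam Pre Post I Tg - {None}
           \<subseteq> Some ` rep_sym (proc_output vsim T PreS FS PostS lam Tg R0 q)"
proof
  fix x assume "x \<in> reach_set f T q F lam Pre Post I Tg - {None}"
  then obtain phi0 s us t where phi0: "phi0 \<in> I"
    and exec: "closed_loop_exec f T q F lam Pre Post phi0 s us"
    and t: "0 \<le> t" "t \<le> real q * T"
    and no_hit: "\<forall>t'\<in>{0..<t}. (s t', us (nat \<lfloor>t' / T\<rfloor>)) \<notin> Tg"
    and x: "x = Some (s t, us (nat \<lfloor>t / T\<rfloor>))"
    unfolding reach_set_def cl_state_def by (auto split: if_splits)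
  define j where "j = nat \<lfloor>t / T\<rfloor>"
  have jt: "real j * T \<le> t" and tj: "t < real (Suc j) * T"
    using nat_floor_divide_bounds[OF T_pos t(1)] unfolding j_def by auto
  have sample_no_hit: "(s (real i * T), us i) \<notin> Tg" if "real i * T < t" for i
    using no_hit[rule_format, of "real i * T"] that T_pos by simp
  have "real j * T \<le> real q * T"
    using jt t(2) by linarith
  then have "j \<le> q"
    using T_pos by simp
  moreover have "\<forall>i<j. (s (real i * T), us i) \<notin> Tg"
  proof (intro allI impI)
    fix i assume "i < j"
    then have "real i * T < real j * T"
      using T_pos by simp
    then show "(s (real i * T), us i) \<notin> Tg"
      using sample_no_hit jt by simp
  qed
  ultimately obtain B where B: "(B, us j) \<in> R j" and sB: "s (real j * T) \<in> B"
    using sampled_state_in_proc_R[OF exec] phi0 I_covered by blast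
  show "x \<in> Some ` rep_sym (proc_output vsim T PreS FS PostS lam Tg R0 q)"
  proof (cases "real j * T < t")
    case True
    then have "real j * T < real q * T"
      using t(2) by linarith
    then have "j < q"
      using T_pos by simp
    have act: "(B, us j) \<in> active Tg (R j)"
      using active_memberI[OF B sB sample_no_hit[OF True]] .
    have Bu: "is_box B" "us j \<in> U"
      using proc_R_wf B by auto
    have "s t \<in> fst (vsim (real j * T) (real (Suc j) * T) B (us j))"
      using vsim_encloses[OF period_le Bu closed_loop_exec_ode_solution[OF T_pos exec \<open>j < q\<close>] sB]
        jt tj by simp
    moreover have "(fst (vsim (real j * T) (real (Suc j) * T) B (us j)), us j)
        \<in> proc_Rint vsim T PreS FS PostS lam Tg R0 j"
      unfolding proc_Rint_def using act by blast
    ultimately show ?thesis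
      using x \<open>j < q\<close> unfolding proc_output_def rep_sym_def j_def by force
  next
    case False
    then have "t = real j * T"
      using jt by simp
    then show ?thesis
      using x B sB \<open>j \<le> q\<close> unfolding proc_output_def rep_sym_def j_def by force
  qed
qed

end

theorem theorem1:
  fixes f :: "real \<Rightarrow> 's::euclidean_space \<Rightarrow> 'd::euclidean_space \<Rightarrow> 's"
    and T :: real and q :: nat
    and U :: "'d set"
    and Nset :: "'n set" and F :: "'n \<Rightarrow> 'm::euclidean_space \<Rightarrow> 'p::euclidean_space"
    and lam :: "'d \<Rightarrow> 'n" and Pre :: "'s \<Rightarrow> 'm" and Post :: "'p \<Rightarrow> 'd"
    and I :: "('s \<times> 'd) set" and Tg :: "('s \<times> 'd) set"
    and vsim :: "real \<Rightarrow> real \<Rightarrow> 's set \<Rightarrow> 'd \<Rightarrow> 's set \<times> 's set"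
    and PreS :: "'s set \<Rightarrow> 'm set" and FS :: "'n \<Rightarrow> 'm set \<Rightarrow> 'p set"
    and PostS :: "'p set \<Rightarrow> 'd set"
    and R0 :: "('s set \<times> 'd) set"
  assumes T_pos: "T > 0"
    and f_cont_t: "\<forall>s u. continuous_on UNIV (\<lambda>t. f t s u)"
    and f_cont_u: "\<forall>t s. continuous_on UNIV (\<lambda>u. f t s u)"
    and f_lipschitz: "\<exists>L. \<forall>t s1 s2 u. dist (f t s1 u) (f t s2 u) \<le> L * dist s1 s2"
    and U_finite: "finite U"
    and N_finite: "finite Nset"
    and N_relu: "\<forall>N\<in>Nset. relu_net_fun (F N)"
    and lam_into: "lam ` U \<subseteq> Nset"
    and Post_into: "\<forall>y. Post y \<in> U"
    and I_sub: "I \<subseteq> UNIV \<times> U"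
    and Tg_sub: "Tg \<subseteq> UNIV \<times> U"
    and vsim_sound: "\<forall>t1 t2 B u. t1 \<le> t2 \<and> is_box B \<and> u \<in> U \<longrightarrow>
        is_box (fst (vsim t1 t2 B u)) \<and> is_box (snd (vsim t1 t2 B u)) \<and>
        (\<forall>s. ode_solution f u t1 t2 s \<and> s t1 \<in> B \<longrightarrow>
              (\<forall>t\<in>{t1..t2}. s t \<in> fst (vsim t1 t2 B u)) \<and> s t2 \<in> snd (vsim t1 t2 B u))"
    and PreS_sound: "\<forall>B. is_box B \<longrightarrow> is_box (PreS B) \<and> Pre ` B \<subseteq> PreS B"
    and FS_sound: "\<forall>N\<in>Nset. \<forall>X. is_box X \<longrightarrow> is_box (FS N X) \<and> F N ` X \<subseteq> FS N X"
    and PostS_sound: "\<forall>Y. is_box Y \<longrightarrow> finite (PostS Y) \<and> PostS Y \<subseteq> U \<and> Post ` Y \<subseteq> PostS Y"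
    and R0_finite: "finite R0"
    and R0_wf: "\<forall>(B, u)\<in>R0. is_box B \<and> u \<in> U"
    and R0_covers: "I \<subseteq> rep_sym R0"
  shows "reach_set f T q F lam Pre Post I Tg - {None}
           \<subseteq> Some ` rep_sym (proc_output vsim T PreS FS PostS lam Tg R0 q)"
proof -
  interpret sound_reachability f T U Nset F lam Pre Post Tg vsim PreS FS PostS R0
    using T_pos lam_into vsim_sound PreS_sound FS_sound PostS_sound R0_wf
    by unfold_locales (fastforce simp: image_subset_iff)+
  show ?thesis
    using reach_set_subset_proc_output[OF R0_covers] .
qed

end
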